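(* Let $A$ be a commutative semiring, $\rho$ a congruence on $A$, $(a,b),(c,d)\in A\times A$, and $c=z_1,z_2,\dots,z_n=d$ ($n\ge2$) a sequence of elements of $A$. If $(a,b)\ast(z_i,z_{i+1})\in\rho_+$ for all $i\in\{1,\dots,n-1\}$, then $(a,b)\ast(c,d)\in\rho_+$.
   Context: Semirings are commutative with $0$ and $1\neq0$, $0a=0$; congruences are equivalence relations compatible with $+,\cdot$. Twisted product $(a,b)\ast(c,d)=(ac+bd,ad+bc)$. $\rho_+=\{(u,v):(u+e,v+e)\in\rho$ for some $e\in A\}$. *)

theory Defs
  imports Main
begin

text \<open>Semirings: commutative, with 0, 1 \<noteq> 0 and 0a = 0 -- the class comm_semiring_1.\<close>

definition semiring_congruence :: "('a::comm_semiring_1 \<times> 'a) set \<Rightarrow> bool" where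
  "semiring_congruence \<rho> \<longleftrightarrow> equiv UNIV \<rho> \<and>
     (\<forall>a b c. (a, b) \<in> \<rho> \<longrightarrow> (a + c, b + c) \<in> \<rho> \<and> (a * c, b * c) \<in> \<rho>)"

definition twisted_prod :: "'a::comm_semiring_1 \<times> 'a \<Rightarrow> 'a \<times> 'a \<Rightarrow> 'a \<times> 'a" where
  "twisted_prod p q = (fst p * fst q + snd p * snd q, fst p * snd q + snd p * fst q)"

definition rho_plus :: "('a::comm_semiring_1 \<times> 'a) set \<Rightarrow> ('a \<times> 'a) set" where
  "rho_plus \<rho> = {(u, v). \<exists>e. (u + e, v + e) \<in> \<rho>}"

end

theory Submission
  imports Defs
begin

text \<open>The composite \<open>(a,b) \<ast> (x,y) + (a,b) \<ast> (y,w)\<close> equals \<open>(a,b) \<ast> (x,w)\<close> shifted on both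
  sides by \<open>ay + by\<close>; since \<open>\<rho>\<^sub>+\<close> is closed under addition and under cancellation of a
  common summand, the relation \<open>(a,b) \<ast> (x,y) \<in> \<rho>\<^sub>+\<close> is transitive in \<open>(x,y)\<close>, and the
  theorem follows by chaining along \<open>z\<^sub>1, \<dots>, z\<^sub>n\<close>.\<close>

lemma semiring_congruence_add:
  assumes cong: "semiring_congruence \<rho>" and "(p, q) \<in> \<rho>" "(r, s) \<in> \<rho>"
  shows "(p + r, q + s) \<in> \<rho>"
proof -
  have eqv: "equiv UNIV \<rho>" using cong unfolding semiring_congruence_def by blast
  have "(p + r, q + r) \<in> \<rho>" using cong \<open>(p, q) \<in> \<rho>\<close> unfolding semiring_congruence_def by blast
  moreover have "(r + q, s + q) \<in> \<rho>" using cong \<open>(r, s) \<in> \<rho>\<close> unfolding semiring_congruence_def by blast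
  hence "(q + r, q + s) \<in> \<rho>" by (simp add: add.commute)
  ultimately show ?thesis using eqv by (meson equivE transE)
qed

lemma rho_plus_add:
  assumes "semiring_congruence \<rho>" "(p, q) \<in> rho_plus \<rho>" "(r, s) \<in> rho_plus \<rho>"
  shows "(p + r, q + s) \<in> rho_plus \<rho>"
proof -
  obtain e f where "(p + e, q + e) \<in> \<rho>" "(r + f, s + f) \<in> \<rho>"
    using assms(2,3) unfolding rho_plus_def by auto
  hence "((p + e) + (r + f), (q + e) + (s + f)) \<in> \<rho>"
    using semiring_congruence_add[OF assms(1)] by blast
  hence "((p + r) + (e + f), (q + s) + (e + f)) \<in> \<rho>" by (simp add: ac_simps)
  thus ?thesis unfolding rho_plus_def by blast
qed

lemma rho_plus_cancel:
  assumes "(p + t, q + t) \<in> rho_plus \<rho>"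
  shows "(p, q) \<in> rho_plus \<rho>"
proof -
  obtain e where "(p + t + e, q + t + e) \<in> \<rho>" using assms unfolding rho_plus_def by auto
  hence "(p + (t + e), q + (t + e)) \<in> \<rho>" by (simp add: add.assoc)
  thus ?thesis unfolding rho_plus_def by blast
qed

lemma twisted_prod_rho_plus_trans:
  assumes "semiring_congruence \<rho>"
    and "twisted_prod (a, b) (x, y) \<in> rho_plus \<rho>"
    and "twisted_prod (a, b) (y, w) \<in> rho_plus \<rho>"
  shows "twisted_prod (a, b) (x, w) \<in> rho_plus \<rho>"
proof -
  have "((a*x + b*y) + (a*y + b*w), (a*y + b*x) + (a*w + b*y)) \<in> rho_plus \<rho>"
    using rho_plus_add[OF assms(1)] assms(2,3) unfolding twisted_prod_def by simp
  hence "((a*x + b*w) + (a*y + b*y), (a*w + b*x) + (a*y + b*y)) \<in> rho_plus \<rho>"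
    by (simp add: ac_simps)
  thus ?thesis unfolding twisted_prod_def by (auto dest: rho_plus_cancel)
qed

lemma twisted_prod_rho_plus_chain:
  fixes m :: nat
  assumes "semiring_congruence \<rho>"
  shows "k < m \<Longrightarrow> \<forall>i\<in>{k..<m}. twisted_prod (a, b) (z i, z (i + 1)) \<in> rho_plus \<rho>
    \<Longrightarrow> twisted_prod (a, b) (z k, z m) \<in> rho_plus \<rho>"
proof (induction m)
  case 0
  then show ?case by simp
next
  case (Suc m)
  show ?case
  proof (cases "k = m")
    case True
    with Suc.prems show ?thesis by simp
  next
    case False
    with Suc.prems have "twisted_prod (a, b) (z k, z m) \<in> rho_plus \<rho>"
      by (intro Suc.IH) auto
    moreover have "twisted_prod (a, b) (z m, z (Suc m)) \<in> rho_plus \<rho>"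
      using Suc.prems False by simp
    ultimately show ?thesis by (rule twisted_prod_rho_plus_trans[OF assms(1)])
  qed
qed

theorem lemma2p22:
  fixes \<rho> :: "('a::comm_semiring_1 \<times> 'a) set"
    and a b c d :: 'a and z :: "nat \<Rightarrow> 'a" and n :: nat
  assumes "semiring_congruence \<rho>"
    and "n \<ge> 2"
    and "z 1 = c" and "z n = d"
    and "\<forall>i\<in>{1..n-1}. twisted_prod (a, b) (z i, z (i + 1)) \<in> rho_plus \<rho>"
  shows "twisted_prod (a, b) (c, d) \<in> rho_plus \<rho>"
proof -
  have "{1..<n} = {1..n-1}" using \<open>n \<ge> 2\<close> by auto
  hence "twisted_prod (a, b) (z 1, z n) \<in> rho_plus \<rho>"
    using twisted_prod_rho_plus_chain[OF assms(1), of 1 n] assms(2,5) by simp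
  with assms(3,4) show ?thesis by simp
qed

end
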